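(* Let $f$ be a pairwise social choice correspondence that satisfies strong Condorcet-consistency, homogeneity, and strategyproofness. If $\mathrm{TC}(R)\subseteq f(R)$ for all profiles $R$, then $f$ is a robust dominant set rule.
   Context: Let $A$ be a finite set of alternatives; a preference profile $R$ assigns a strict total order $\succ_i$ on $A$ to each voter $i$ of a finite non-empty electorate $N\subseteq\{1,2,\dots\}$; $\mathcal{R}^*(A)$ is the set of all profiles over all electorates. $g_R(x,y)=|\{i: x\succ_i y\}|-|\{i: y\succ_i x\}|$; $x\succsim_R y$ iff $g_R(x,y)\ge0$, with strict part $\succ_R$. A Condorcet winner is $x$ with $x\succ_R y$ for all $y\ne x$. A non-empty $X$ is dominant in $R$ if $x\succ_R y$ for all $x\in X,y\notin X$; $\mathrm{TC}(R)$ is the inclusion-smallest dominant set. An SCC is $f:\mathcal{R}^*(A)\to 2^A\setminus\{\emptyset\}$; pairwise: $f(R)=f(R')$ whenever $g_R=g_{R'}$; homogeneous: $f(kR)=f(R)$ where $kR$ is $k$ copies of $R$; strongly Condorcet-consistent: $f(R)=\{x\}$ iff $x$ is the Condorcet winner in $R$. Fishburn's extension: for $X\ne Y$, $X\succ_i^F Y$ iff $x\succ_i y$ for all $x\in X\setminus Y,y\in Y$ and for all $x\in X,y\in Y\setminus X$; $f$ is strategyproof if no voter $i$ can change only his own preference to move from $R$ to $R'$ with $f(R')\succ_i^F f(R)$. $f$ is a dominant set rule if $f(R)$ is dominant in $R$ for all $R$; it is robust if $f(R')\subseteq f(R)$ whenever $f(R)$ is dominant in $R'$. *)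

theory Defs
  imports Main
begin

text \<open>Preferences: a strict total order on the finite alternative set A, as a relation
  (x,y) \<in> r meaning x is strictly preferred to y.\<close>
definition strict_total_order :: "'a set \<Rightarrow> ('a \<times> 'a) set \<Rightarrow> bool" where
  "strict_total_order A r \<longleftrightarrow> r \<subseteq> A \<times> A \<and> irrefl r \<and> trans r \<and>
     (\<forall>x\<in>A. \<forall>y\<in>A. x \<noteq> y \<longrightarrow> (x, y) \<in> r \<or> (y, x) \<in> r)"

text \<open>A profile is a partial map from voters (positive naturals) to preferences;
  its electorate is the domain of the map.\<close>
type_synonym 'a profile = "nat \<Rightarrow> ('a \<times> 'a) set option"

definition is_profile :: "'a set \<Rightarrow> 'a profile \<Rightarrow> bool" where
  "is_profile A R \<longleftrightarrow> finite (dom R) \<and> dom R \<noteq> {} \<and> 0 \<notin> dom R \<and>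
     (\<forall>i\<in>dom R. strict_total_order A (the (R i)))"

definition prefers :: "'a profile \<Rightarrow> nat \<Rightarrow> 'a \<Rightarrow> 'a \<Rightarrow> bool" where
  "prefers R i x y \<longleftrightarrow> (\<exists>r. R i = Some r \<and> (x, y) \<in> r)"

definition margin :: "'a profile \<Rightarrow> 'a \<Rightarrow> 'a \<Rightarrow> int" where
  "margin R x y = int (card {i\<in>dom R. prefers R i x y}) - int (card {i\<in>dom R. prefers R i y x})"

definition condorcet_winner :: "'a set \<Rightarrow> 'a profile \<Rightarrow> 'a \<Rightarrow> bool" where
  "condorcet_winner A R x \<longleftrightarrow> x \<in> A \<and> (\<forall>y\<in>A. y \<noteq> x \<longrightarrow> margin R x y > 0)"

definition dominant :: "'a set \<Rightarrow> 'a profile \<Rightarrow> 'a set \<Rightarrow> bool" where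
  "dominant A R X \<longleftrightarrow> X \<noteq> {} \<and> X \<subseteq> A \<and> (\<forall>x\<in>X. \<forall>y\<in>A - X. margin R x y > 0)"

definition TC :: "'a set \<Rightarrow> 'a profile \<Rightarrow> 'a set" where
  "TC A R = (THE X. dominant A R X \<and> (\<forall>Y. dominant A R Y \<longrightarrow> X \<subseteq> Y))"

definition is_SCC :: "'a set \<Rightarrow> ('a profile \<Rightarrow> 'a set) \<Rightarrow> bool" where
  "is_SCC A f \<longleftrightarrow> (\<forall>R. is_profile A R \<longrightarrow> f R \<noteq> {} \<and> f R \<subseteq> A)"

definition pairwise_scc :: "'a set \<Rightarrow> ('a profile \<Rightarrow> 'a set) \<Rightarrow> bool" where
  "pairwise_scc A f \<longleftrightarrow> (\<forall>R R'. is_profile A R \<longrightarrow> is_profile A R' \<longrightarrow>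
     (\<forall>x\<in>A. \<forall>y\<in>A. margin R x y = margin R' x y) \<longrightarrow> f R = f R')"

definition copies :: "nat \<Rightarrow> 'a profile \<Rightarrow> 'a profile \<Rightarrow> bool" where
  "copies k R R' \<longleftrightarrow> (\<exists>\<pi>. \<pi> ` dom R' \<subseteq> dom R \<and>
     (\<forall>i\<in>dom R. card {j\<in>dom R'. \<pi> j = i} = k) \<and>
     (\<forall>j\<in>dom R'. R' j = R (\<pi> j)))"

definition homogeneous :: "'a set \<Rightarrow> ('a profile \<Rightarrow> 'a set) \<Rightarrow> bool" where
  "homogeneous A f \<longleftrightarrow> (\<forall>k R R'. k \<ge> 1 \<longrightarrow> is_profile A R \<longrightarrow> is_profile A R' \<longrightarrow>
     copies k R R' \<longrightarrow> f R' = f R)"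

definition strongly_condorcet_consistent :: "'a set \<Rightarrow> ('a profile \<Rightarrow> 'a set) \<Rightarrow> bool" where
  "strongly_condorcet_consistent A f \<longleftrightarrow> (\<forall>R x. is_profile A R \<longrightarrow>
     (f R = {x} \<longleftrightarrow> condorcet_winner A R x))"

definition fishburn :: "'a profile \<Rightarrow> nat \<Rightarrow> 'a set \<Rightarrow> 'a set \<Rightarrow> bool" where
  "fishburn R i X Y \<longleftrightarrow> X \<noteq> Y \<and>
     (\<forall>x\<in>X - Y. \<forall>y\<in>Y. prefers R i x y) \<and> (\<forall>x\<in>X. \<forall>y\<in>Y - X. prefers R i x y)"

definition strategyproof :: "'a set \<Rightarrow> ('a profile \<Rightarrow> 'a set) \<Rightarrow> bool" where
  "strategyproof A f \<longleftrightarrow> (\<forall>R R' i. is_profile A R \<longrightarrow> is_profile A R' \<longrightarrow>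
     i \<in> dom R \<longrightarrow> dom R' = dom R \<longrightarrow> (\<forall>j. j \<noteq> i \<longrightarrow> R' j = R j) \<longrightarrow>
     \<not> fishburn R i (f R') (f R))"

definition dominant_set_rule :: "'a set \<Rightarrow> ('a profile \<Rightarrow> 'a set) \<Rightarrow> bool" where
  "dominant_set_rule A f \<longleftrightarrow> (\<forall>R. is_profile A R \<longrightarrow> dominant A R (f R))"

definition robust :: "'a set \<Rightarrow> ('a profile \<Rightarrow> 'a set) \<Rightarrow> bool" where
  "robust A f \<longleftrightarrow> (\<forall>R R'. is_profile A R \<longrightarrow> is_profile A R' \<longrightarrow>
     dominant A R' (f R) \<longrightarrow> f R' \<subseteq> f R)"

end

theory Submission
  imports Defs
begin

text \<open>Since \<open>f\<close> is pairwise, only margins matter, and by homogeneity we may double all margins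
  and assume they are even. Changing the margin of \<open>a\<close> over \<open>b\<close> by 2 is then realised by
  adding two voters with mutually reversed ballots, the first of which afterwards moves \<open>a\<close> from
  directly below \<open>b\<close> to directly above it. Strategyproofness for Fishburn's extension restricts
  how the choice set can react to such a unilateral swap.

  Dominance of \<open>f R\<close> is proved by descent on the total absolute margin: if \<open>f R\<close> is not
  dominant, some \<open>x \<in> f R\<close> outside the top cycle is beaten by some \<open>w\<close> in the top cycle;
  weakening \<open>w\<close> against \<open>x\<close> by one swap yields a profile with a dominant choice set, from which
  undoing the swap cannot lead to \<open>f R\<close>. Robustness is proved by a similar descent down to
  profiles whose only positive margins go from \<open>f R\<close> to its complement; there a power-of-two
  multiple of one profile dominates the other across \<open>f R\<close>, and lifting chosen over unchosen
  alternatives never changes the choice set.\<close>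

definition ballot_margin :: "('a \<times> 'a) set \<Rightarrow> 'a \<Rightarrow> 'a \<Rightarrow> int" where
  "ballot_margin r x y = (if (x, y) \<in> r then 1 else 0) - (if (y, x) \<in> r then 1 else 0)"

definition swap_gain :: "'a \<Rightarrow> 'a \<Rightarrow> 'a \<Rightarrow> 'a \<Rightarrow> int" where
  "swap_gain a b u v = (if (u, v) = (a, b) then 2 else if (u, v) = (b, a) then - 2 else 0)"

text \<open>\<open>lifted A a b R R'\<close>: the margins of \<open>R'\<close> are those of \<open>R\<close> after a single voter moves \<open>a\<close>
  from directly below \<open>b\<close> to directly above it.\<close>
definition lifted :: "'a set \<Rightarrow> 'a \<Rightarrow> 'a \<Rightarrow> 'a profile \<Rightarrow> 'a profile \<Rightarrow> bool" where
  "lifted A a b R R' \<longleftrightarrow> (\<forall>u\<in>A. \<forall>v\<in>A. margin R' u v = margin R u v + swap_gain a b u v)"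

lemma margin_swap: "margin R y x = - margin R x y"
  by (simp add: margin_def)

lemma margin_refl [simp]: "margin R x x = 0"
  by (simp add: margin_def)

lemma card_prefers_fun_upd:
  assumes "finite (dom R)" "i \<notin> dom R"
  shows "card {k \<in> dom (R(i \<mapsto> r)). prefers (R(i \<mapsto> r)) k x y} =
         card {k \<in> dom R. prefers R k x y} + (if (x, y) \<in> r then 1 else 0)"
proof -
  have "{k \<in> dom (R(i \<mapsto> r)). prefers (R(i \<mapsto> r)) k x y} =
        (if (x, y) \<in> r then insert i else id) {k \<in> dom R. prefers R k x y}"
    using assms(2) by (auto simp: prefers_def)
  then show ?thesis
    using assms by simp
qed

lemma margin_fun_upd:
  assumes "finite (dom R)" "i \<notin> dom R"
  shows "margin (R(i \<mapsto> r)) x y = margin R x y + ballot_margin r x y"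
  using card_prefers_fun_upd[OF assms, of r x y] card_prefers_fun_upd[OF assms, of r y x]
  by (simp add: margin_def ballot_margin_def)

lemma is_profile_fun_upd:
  "is_profile A R \<Longrightarrow> i \<noteq> 0 \<Longrightarrow> strict_total_order A r \<Longrightarrow> is_profile A (R(i \<mapsto> r))"
  by (auto simp: is_profile_def)

lemma Suc_Max_notin_dom: "finite (dom R) \<Longrightarrow> Suc (Max (dom R)) + k \<notin> dom R"
  using Max_ge by fastforce

lemma ballot_margin_converse: "ballot_margin (r\<inverse>) x y = - ballot_margin r x y"
  by (simp add: ballot_margin_def)

lemma strict_total_order_converse:
  "strict_total_order A r \<Longrightarrow> strict_total_order A (r\<inverse>)"
  unfolding strict_total_order_def irrefl_def trans_def by blast

definition rank_order :: "'a set \<Rightarrow> ('a \<Rightarrow> nat) \<Rightarrow> ('a \<Rightarrow> nat) \<Rightarrow> ('a \<times> 'a) set" where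
  "rank_order A k h = {(u, v). u \<in> A \<and> v \<in> A \<and> (k u < k v \<or> k u = k v \<and> h u < h v)}"

text \<open>Ranks by level (lower is better), except that \<open>x\<close> and \<open>y\<close> are moved to the better of
  their two levels, \<open>x\<close> directly above \<open>y\<close>.\<close>
definition adjacent_key :: "('a \<Rightarrow> nat) \<Rightarrow> 'a \<Rightarrow> 'a \<Rightarrow> 'a \<Rightarrow> nat" where
  "adjacent_key lvl x y z =
     (if z = x then 4 * min (lvl x) (lvl y) + 1
      else if z = y then 4 * min (lvl x) (lvl y) + 2 else 4 * lvl z)"

lemma strict_total_order_rank_order:
  assumes "inj_on h A"
  shows "strict_total_order A (rank_order A k h)"
proof -
  have "h x \<noteq> h y" if "x \<in> A" "y \<in> A" "x \<noteq> y" for x y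
    using assms that by (auto dest: inj_onD)
  then show ?thesis
    unfolding strict_total_order_def irrefl_def trans_def rank_order_def
    by (auto simp: neq_iff)
qed

lemma rank_order_adjacent_key_mem:
  assumes "x \<in> A" "y \<in> A" "lvl y < lvl x" "x \<in> {a, b} \<longrightarrow> lvl y \<le> min (lvl a) (lvl b)"
    and "\<not> (y = b \<and> x = a)"
  shows "(y, x) \<in> rank_order A (adjacent_key lvl a b) h"
proof -
  have "adjacent_key lvl a b y < adjacent_key lvl a b x"
    using assms(3-) unfolding adjacent_key_def by (auto simp: min_def)
  then show ?thesis
    using assms(1,2) by (simp add: rank_order_def)
qed

lemma adjacent_key_swap_agrees:
  assumes "{u, v} \<noteq> {a, b}"
  shows "adjacent_key lvl a b u < adjacent_key lvl a b v \<longleftrightarrow>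
           adjacent_key lvl b a u < adjacent_key lvl b a v"
    and "adjacent_key lvl a b u = adjacent_key lvl a b v \<longleftrightarrow>
           adjacent_key lvl b a u = adjacent_key lvl b a v"
proof -
  have "(4 * n < 4 * m + 1 \<longleftrightarrow> 4 * n < 4 * m + 2) \<and> (4 * m + 1 < 4 * n \<longleftrightarrow> 4 * m + 2 < 4 * n) \<and>
        4 * m + 1 \<noteq> 4 * n \<and> 4 * m + 2 \<noteq> 4 * n \<and> 4 * n \<noteq> 4 * m + 1 \<and> 4 * n \<noteq> 4 * m + (2::nat)"
    for n m
    by presburger
  then show "adjacent_key lvl a b u < adjacent_key lvl a b v \<longleftrightarrow>
           adjacent_key lvl b a u < adjacent_key lvl b a v"
    and "adjacent_key lvl a b u = adjacent_key lvl a b v \<longleftrightarrow>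
           adjacent_key lvl b a u = adjacent_key lvl b a v"
    using assms unfolding adjacent_key_def by (auto simp: doubleton_eq_iff min.commute)
qed

lemma ballot_margin_adjacent_swap:
  assumes "a \<in> A" "b \<in> A" "a \<noteq> b"
  shows "ballot_margin (rank_order A (adjacent_key lvl a b) h) u v =
         ballot_margin (rank_order A (adjacent_key lvl b a) h) u v + swap_gain a b u v"
proof (cases "{u, v} = {a, b}")
  case True
  then have "u = a \<and> v = b \<or> u = b \<and> v = a"
    by (auto simp: doubleton_eq_iff)
  then show ?thesis
    using assms unfolding ballot_margin_def swap_gain_def rank_order_def adjacent_key_def
    by (elim disjE) simp_all
next
  case False
  then have "{v, u} \<noteq> {a, b}" by (simp add: insert_commute)
  with False show ?thesis
    using adjacent_key_swap_agrees[of u v a b lvl] adjacent_key_swap_agrees[of v u a b lvl]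
    unfolding ballot_margin_def swap_gain_def rank_order_def by (auto simp: doubleton_eq_iff)
qed

lemma ex_unilateral_lift:
  assumes R: "is_profile A R" and h: "inj_on h A" and ab: "a \<in> A" "b \<in> A" "a \<noteq> b"
  obtains S S' i where "is_profile A S" "is_profile A S'" "i \<in> dom S" "dom S' = dom S"
    "\<forall>j. j \<noteq> i \<longrightarrow> S' j = S j" "S i = Some (rank_order A (adjacent_key lvl b a) h)"
    "\<forall>u\<in>A. \<forall>v\<in>A. margin S u v = margin R u v" "lifted A a b R S'"
proof -
  txt \<open>Add the ballot \<open>r\<close> and its reverse, which leaves all margins unchanged; the deviation
    swaps \<open>a\<close> and \<open>b\<close> in the first of them.\<close>
  define r where "r = rank_order A (adjacent_key lvl b a) h"
  define r' where "r' = rank_order A (adjacent_key lvl a b) h"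
  define i where "i = Suc (Max (dom R))"
  define S where "S = R(i \<mapsto> r, Suc i \<mapsto> r\<inverse>)"
  define S' where "S' = R(i \<mapsto> r', Suc i \<mapsto> r\<inverse>)"
  have fin: "finite (dom R)" using R by (simp add: is_profile_def)
  have fresh: "i \<notin> dom R" "Suc i \<notin> dom (R(i \<mapsto> t))" for t
    using Suc_Max_notin_dom[OF fin, of 0] Suc_Max_notin_dom[OF fin, of 1] by (simp_all add: i_def)
  have orders: "strict_total_order A r" "strict_total_order A r'" "strict_total_order A (r\<inverse>)"
    using strict_total_order_rank_order[OF h] strict_total_order_converse
    unfolding r_def r'_def by blast+
  have margin_two: "margin (R(i \<mapsto> t, Suc i \<mapsto> r\<inverse>)) u v =
      margin R u v + ballot_margin t u v - ballot_margin r u v" for t u v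
    using margin_fun_upd[OF fin fresh(1)] margin_fun_upd[OF _ fresh(2)] fin
    by (simp add: ballot_margin_converse)
  show thesis
  proof
    show "is_profile A S" "is_profile A S'"
      unfolding S_def S'_def using R orders by (simp_all add: is_profile_fun_upd i_def)
    show "i \<in> dom S" "dom S' = dom S" "\<forall>j. j \<noteq> i \<longrightarrow> S' j = S j"
      "S i = Some (rank_order A (adjacent_key lvl b a) h)"
      by (auto simp: S_def S'_def r_def)
    show "\<forall>u\<in>A. \<forall>v\<in>A. margin S u v = margin R u v"
      unfolding S_def margin_two by simp
    show "lifted A a b R S'"
      using ballot_margin_adjacent_swap[OF ab, of lvl h]
      unfolding lifted_def S'_def margin_two r_def[symmetric] r'_def[symmetric] by simp
  qed
qed

lemma ex_lifted:
  assumes "finite A" "is_profile A R" "a \<in> A" "b \<in> A" "a \<noteq> b"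
  obtains R' where "is_profile A R'" "lifted A a b R R'"
proof -
  obtain h :: "'a \<Rightarrow> nat" where "inj_on h A"
    using finite_imp_inj_to_nat_seg[OF assms(1)] by blast
  then show thesis
    using ex_unilateral_lift[OF assms(2) _ assms(3-5)] that by metis
qed

lemma lifted_converse: "a \<noteq> b \<Longrightarrow> lifted A a b R R' \<Longrightarrow> lifted A b a R' R"
  by (auto simp: lifted_def swap_gain_def)

definition even_margins :: "'a set \<Rightarrow> 'a profile \<Rightarrow> bool" where
  "even_margins A R \<longleftrightarrow> (\<forall>x\<in>A. \<forall>y\<in>A. even (margin R x y))"

lemma even_margins_lifted: "lifted A a b R R' \<Longrightarrow> even_margins A R \<Longrightarrow> even_margins A R'"
  by (simp add: lifted_def even_margins_def swap_gain_def)

lemma even_margins_pos_ge_2: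
  "even_margins A R \<Longrightarrow> a \<in> A \<Longrightarrow> b \<in> A \<Longrightarrow> margin R a b > 0 \<Longrightarrow> margin R a b \<ge> 2"
  unfolding even_margins_def by fastforce

lemma div_2_preimage_eq: "{k::nat. k div 2 \<in> S} = (\<lambda>i. 2 * i) ` S \<union> (\<lambda>i. 2 * i + 1) ` S"
proof -
  have "k = 2 * (k div 2) \<or> k = 2 * (k div 2) + 1" for k :: nat
    by presburger
  then show ?thesis
    by (auto simp: image_iff)
qed

lemma card_div_2_preimage:
  assumes "finite S"
  shows "card {k::nat. k div 2 \<in> S} = 2 * card S"
proof -
  have "(\<lambda>i::nat. 2 * i) ` S \<inter> (\<lambda>i. 2 * i + 1) ` S = {}"
    by auto presburger
  moreover have "inj_on (\<lambda>i::nat. 2 * i) S" "inj_on (\<lambda>i::nat. 2 * i + 1) S"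
    by (auto simp: inj_on_def)
  ultimately show ?thesis
    using assms by (simp add: div_2_preimage_eq card_Un_disjoint card_image)
qed

lemma double_profile:
  assumes R: "is_profile A R"
  shows "is_profile A (\<lambda>k. R (k div 2))" "margin (\<lambda>k. R (k div 2)) x y = 2 * margin R x y"
    "copies 2 R (\<lambda>k. R (k div 2))"
proof -
  define R2 where "R2 = (\<lambda>k. R (k div 2))"
  have dom2: "dom R2 = {k. k div 2 \<in> dom R}"
    by (auto simp: R2_def dom_def)
  have fin: "finite (dom R)" "dom R \<noteq> {}" "0 \<notin> dom R"
    using R by (auto simp: is_profile_def)
  have "finite (dom R2)"
    using fin(1) unfolding dom2 div_2_preimage_eq by simp
  moreover have "dom R2 \<noteq> {}"
  proof -
    obtain i where "i \<in> dom R" using fin(2) by blast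
    then have "2 * i \<in> dom R2" unfolding dom2 by simp
    then show ?thesis by blast
  qed
  moreover have "0 \<notin> dom R2"
    using fin(3) unfolding dom2 by simp
  moreover have "\<forall>i\<in>dom R2. strict_total_order A (the (R2 i))"
    using R unfolding dom2 is_profile_def R2_def by auto
  ultimately show "is_profile A (\<lambda>k. R (k div 2))"
    unfolding R2_def[symmetric] is_profile_def by blast
  have "card {k \<in> dom R2. prefers R2 k x y} = 2 * card {i \<in> dom R. prefers R i x y}" for x y
  proof -
    have "{k \<in> dom R2. prefers R2 k x y} = {k. k div 2 \<in> {i \<in> dom R. prefers R i x y}}"
      unfolding dom2 R2_def prefers_def by auto
    then show ?thesis
      using card_div_2_preimage[of "{i \<in> dom R. prefers R i x y}"] fin(1) by simp
  qed
  then show "margin (\<lambda>k. R (k div 2)) x y = 2 * margin R x y"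
    unfolding R2_def[symmetric] margin_def by simp
  have "card {j \<in> dom R2. j div 2 = i} = 2" if "i \<in> dom R" for i
  proof -
    have "{j \<in> dom R2. j div 2 = i} = {k. k div 2 \<in> {i}}"
      using that unfolding dom2 by auto
    then show ?thesis
      using card_div_2_preimage[of "{i}"] by simp
  qed
  then show "copies 2 R (\<lambda>k. R (k div 2))"
    unfolding copies_def R2_def[symmetric]
    by (intro exI[of _ "\<lambda>k. k div 2"]) (auto simp: dom2 R2_def)
qed

lemma dominant_nested:
  assumes "dominant A R X" "dominant A R Y"
  shows "X \<subseteq> Y \<or> Y \<subseteq> X"
proof (rule ccontr)
  assume "\<not> ?thesis"
  then obtain x y where "x \<in> X" "x \<notin> Y" "y \<in> Y" "y \<notin> X" by blast
  moreover have "X \<subseteq> A" "Y \<subseteq> A"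
    using assms by (auto simp: dominant_def)
  ultimately have "margin R x y > 0" "margin R y x > 0"
    using assms unfolding dominant_def by auto
  then show False
    by (simp add: margin_swap[of R y x])
qed

lemma dominant_TC:
  assumes "finite A" "A \<noteq> {}"
  shows "dominant A R (TC A R)"
proof -
  have "dominant A R A"
    using assms by (simp add: dominant_def)
  then obtain X where X: "dominant A R X" and least: "\<And>Y. dominant A R Y \<Longrightarrow> card X \<le> card Y"
    using ex_has_least_nat[of "dominant A R" A card] by blast
  have "X \<subseteq> Y" if Y: "dominant A R Y" for Y
  proof (cases "Y \<subseteq> X")
    case True
    have "finite X"
      using X assms(1) finite_subset unfolding dominant_def by blast
    with True least[OF Y] show ?thesis
      using card_seteq by blast
  next
    case False
    then show ?thesis
      using dominant_nested[OF X Y] by blast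
  qed
  with X have "TC A R = X"
    unfolding TC_def by (intro the_equality) auto
  with X show ?thesis by simp
qed

lemma dominant_lifted:
  assumes X: "dominant A R X" and lift: "lifted A a b R R'"
    and "b \<in> X \<and> a \<notin> X \<longrightarrow> margin R b a > 2"
  shows "dominant A R' X"
  unfolding dominant_def
proof (intro conjI ballI)
  show "X \<noteq> {}" "X \<subseteq> A"
    using X unfolding dominant_def by blast+
  fix x y
  assume xy: "x \<in> X" "y \<in> A - X"
  then have pos: "margin R x y > 0" and "x \<in> A"
    using X unfolding dominant_def by blast+
  with xy have gain: "margin R' x y = margin R x y + swap_gain a b x y"
    using lift by (simp add: lifted_def)
  show "margin R' x y > 0"
  proof (cases "x = b \<and> y = a")
    case True
    then have "margin R b a > 2" "a \<noteq> b"
      using xy assms(3) by auto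
    with True gain show ?thesis
      by (simp add: swap_gain_def)
  next
    case False
    then have "swap_gain a b x y \<ge> 0"
      by (auto simp: swap_gain_def)
    with pos gain show ?thesis by simp
  qed
qed

lemma dominant_double_iff:
  "(\<And>u v. margin R2 u v = 2 * margin R u v) \<Longrightarrow> dominant A R2 X \<longleftrightarrow> dominant A R X"
  by (simp add: dominant_def)

definition margin_mass :: "'a set \<Rightarrow> 'a profile \<Rightarrow> nat" where
  "margin_mass A R = (\<Sum>(x, y)\<in>A \<times> A. nat \<bar>margin R x y\<bar>)"

lemma abs_margin_le_margin_mass:
  assumes "finite A" "x \<in> A" "y \<in> A"
  shows "\<bar>margin R x y\<bar> \<le> int (margin_mass A R)"
proof -
  have "nat \<bar>margin R x y\<bar> \<le> margin_mass A R"
    unfolding margin_mass_def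
    using member_le_sum[of "(x, y)" "A \<times> A" "\<lambda>(x, y). nat \<bar>margin R x y\<bar>"] assms by simp
  then show ?thesis by simp
qed

lemma margin_mass_lifted_less:
  assumes "finite A" "a \<in> A" "b \<in> A" "a \<noteq> b" and lift: "lifted A b a R R'"
    and "margin R a b \<ge> 2"
  shows "margin_mass A R' < margin_mass A R"
  unfolding margin_mass_def
proof (rule sum_strict_mono_ex1)
  have ba: "margin R b a = - margin R a b"
    by (rule margin_swap)
  show "finite (A \<times> A)"
    using assms(1) by simp
  show "\<forall>p\<in>A \<times> A. (\<lambda>(x, y). nat \<bar>margin R' x y\<bar>) p \<le> (\<lambda>(x, y). nat \<bar>margin R x y\<bar>) p"
  proof (clarify)
    fix x y
    assume "x \<in> A" "y \<in> A"
    then have "margin R' x y = margin R x y + swap_gain b a x y"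
      using lift by (simp add: lifted_def)
    then show "nat \<bar>margin R' x y\<bar> \<le> nat \<bar>margin R x y\<bar>"
      using assms(4,6) ba by (auto simp: swap_gain_def)
  qed
  have "margin R' a b = margin R a b - 2"
    using lift assms(2-4) by (simp add: lifted_def swap_gain_def)
  then show "\<exists>p\<in>A \<times> A. (\<lambda>(x, y). nat \<bar>margin R' x y\<bar>) p < (\<lambda>(x, y). nat \<bar>margin R x y\<bar>) p"
    using assms(2,3,6) by (intro bexI[of _ "(a, b)"]) auto
qed

lemma margin_eq_0_if_positive_across:
  assumes across: "\<And>x y. x \<in> A \<Longrightarrow> y \<in> A \<Longrightarrow> margin R x y > 0 \<Longrightarrow> x \<in> X \<and> y \<notin> X"
    and "u \<in> A" "v \<in> A" "u \<in> X \<longleftrightarrow> v \<in> X"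
  shows "margin R u v = 0"
  using across[of u v] across[of v u] assms(2-4) margin_swap[of R v u] by linarith

definition cross_gap :: "'a set \<Rightarrow> 'a set \<Rightarrow> 'a profile \<Rightarrow> 'a profile \<Rightarrow> nat" where
  "cross_gap A X G R = (\<Sum>(x, y)\<in>X \<times> (A - X). nat (margin G x y - margin R x y))"

locale strategyproof_pairwise_scc =
  fixes A :: "'a set" and f :: "'a profile \<Rightarrow> 'a set"
  assumes finite_A: "finite A" and scc: "is_SCC A f" and pairwise: "pairwise_scc A f"
    and strategyproof: "strategyproof A f"
begin

lemma choice_subset: "is_profile A R \<Longrightarrow> f R \<subseteq> A"
  using scc by (simp add: is_SCC_def)

lemma choice_nonempty: "is_profile A R \<Longrightarrow> f R \<noteq> {}"
  using scc by (simp add: is_SCC_def)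

lemma choice_cong:
  "is_profile A R \<Longrightarrow> is_profile A R' \<Longrightarrow> (\<And>x y. x \<in> A \<Longrightarrow> y \<in> A \<Longrightarrow> margin R x y = margin R' x y)
    \<Longrightarrow> f R = f R'"
  using pairwise unfolding pairwise_scc_def by blast

lemma lifted_choice_cases:
  assumes R: "is_profile A R" and R': "is_profile A R'" and ab: "a \<in> A" "b \<in> A" "a \<noteq> b"
    and lift: "lifted A a b R R'"
  shows "f R' = f R \<or> (a \<in> f R' - f R \<and> b \<in> f R) \<or> (a \<in> f R' \<and> b \<in> f R - f R')
    \<or> (a \<in> f R - f R' \<and> b \<in> f R' - f R \<and> f R \<inter> f R' \<noteq> {})"
proof (rule ccontr)
  assume no_case: "\<not> ?thesis"
  define X where "X = f R"
  define Y where "Y = f R'"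
  have XY: "X \<subseteq> A" "Y \<subseteq> A" "X \<noteq> Y"
    using no_case choice_subset[OF R] choice_subset[OF R'] by (auto simp: X_def Y_def)
  txt \<open>A voter ranking these levels in order, with \<open>b\<close> directly above \<open>a\<close>, would gain in the
    sense of Fishburn by reporting \<open>a\<close> directly above \<open>b\<close>; such a ranking exists exactly in the
    excluded cases.\<close>
  define lvl :: "'a \<Rightarrow> nat" where
    "lvl z = (if z \<in> Y - X then 0 else if z \<in> X \<inter> Y then 1 else if z \<in> X - Y then 2 else 3)" for z
  have lvl_0: "lvl z = 0 \<longleftrightarrow> z \<in> Y - X" and lvl_1: "lvl z = 1 \<longleftrightarrow> z \<in> X \<inter> Y"
    and lvl_2: "lvl z = 2 \<longleftrightarrow> z \<in> X - Y" for z
    by (auto simp: lvl_def)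
  have not_inverted: "\<not> (lvl a < lvl b \<and> lvl b \<le> 2)"
  proof
    assume "lvl a < lvl b \<and> lvl b \<le> 2"
    then have "lvl a = 0 \<and> (lvl b = 1 \<or> lvl b = 2) \<or> lvl a = 1 \<and> lvl b = 2"
      by linarith
    then show False
      using no_case unfolding lvl_0 lvl_1 lvl_2 X_def Y_def by blast
  qed
  have not_separated: "\<not> (lvl b = 0 \<and> lvl a = 2 \<and> lvl z = 1)" for z
    using no_case unfolding lvl_0 lvl_1 lvl_2 X_def Y_def by blast
  obtain h :: "'a \<Rightarrow> nat" where h: "inj_on h A"
    using finite_imp_inj_to_nat_seg[OF finite_A] by blast
  obtain S S' i where S: "is_profile A S" and S': "is_profile A S'" and i: "i \<in> dom S"
    and dom: "dom S' = dom S" and others: "\<forall>j. j \<noteq> i \<longrightarrow> S' j = S j"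
    and Si: "S i = Some (rank_order A (adjacent_key lvl b a) h)"
    and same: "\<forall>u\<in>A. \<forall>v\<in>A. margin S u v = margin R u v" and lift': "lifted A a b R S'"
    using ex_unilateral_lift[OF R h ab] by blast
  have "f S = X"
    unfolding X_def using choice_cong[OF S R] same by simp
  moreover have "f S' = Y"
    unfolding Y_def using choice_cong[OF S' R'] lift lift' by (simp add: lifted_def)
  moreover have "\<not> fishburn S i (f S') (f S)"
    using strategyproof S S' i dom others unfolding strategyproof_def by blast
  moreover have "fishburn S i Y X"
  proof -
    have "prefers S i y x" if "x \<in> X" "y \<in> Y" "lvl y < lvl x" for x y
    proof -
      have "lvl x \<le> 2"
        using that(1) by (simp add: lvl_def)
      then have "(y, x) \<in> rank_order A (adjacent_key lvl b a) h"
        using that XY not_inverted not_separated[of y]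
        by (intro rank_order_adjacent_key_mem) auto
      then show ?thesis
        using Si by (simp add: prefers_def)
    qed
    then show ?thesis
      unfolding fishburn_def using XY by (auto simp: lvl_def)
  qed
  ultimately show False by simp
qed

lemma lifted_choice_cases_if_dominant:
  assumes R: "is_profile A R" and R': "is_profile A R'" and ab: "a \<in> A" "b \<in> A" "a \<noteq> b"
    and lift: "lifted A a b R R'" and dom: "dominant A R (f R)" and "margin R b a \<le> 0"
  shows "f R' = f R \<or> (a \<in> f R' \<and> b \<in> f R - f R')
    \<or> (a \<in> f R - f R' \<and> b \<in> f R' - f R \<and> f R \<inter> f R' \<noteq> {})"
proof -
  have "\<not> (b \<in> f R \<and> a \<notin> f R)"
    using dom ab(1) assms(8) unfolding dominant_def by (meson DiffI not_le)
  then show ?thesis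
    using lifted_choice_cases[OF R R' ab lift] by blast
qed

end

locale tc_including_scc = strategyproof_pairwise_scc +
  assumes homogeneous: "homogeneous A f"
    and TC_subset_choice: "\<And>R. is_profile A R \<Longrightarrow> TC A R \<subseteq> f R"
begin

lemma ex_double:
  assumes "is_profile A R"
  obtains R2 where "is_profile A R2" "\<And>u v. margin R2 u v = 2 * margin R u v" "f R2 = f R"
proof
  show "f (\<lambda>k. R (k div 2)) = f R"
    using homogeneous double_profile[OF assms] assms unfolding homogeneous_def
    by (metis one_le_numeral)
qed (use double_profile[OF assms] in auto)

lemma ex_power_scaled:
  assumes "is_profile A R"
  obtains H where "is_profile A H" "\<And>u v. margin H u v = 2 ^ n * margin R u v" "f H = f R"
proof (induction n arbitrary: thesis)
  case 0
  then show ?case using assms by simp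
next
  case (Suc n)
  then obtain H where H: "is_profile A H" "\<And>u v. margin H u v = 2 ^ n * margin R u v" "f H = f R"
    by blast
  obtain H2 where "is_profile A H2" "\<And>u v. margin H2 u v = 2 * margin H u v" "f H2 = f H"
    using ex_double[OF H(1)] by blast
  with H show ?case
    using Suc.prems[of H2] by simp
qed

lemma dominant_choice_even:
  "is_profile A R \<Longrightarrow> even_margins A R \<Longrightarrow> dominant A R (f R)"
proof (induction "margin_mass A R" arbitrary: R rule: less_induct)
  case less
  then have R: "is_profile A R" and even: "even_margins A R" by auto
  have X: "f R \<noteq> {}" "f R \<subseteq> A"
    using choice_nonempty[OF R] choice_subset[OF R] .
  show ?case
  proof (rule ccontr)
    assume "\<not> dominant A R (f R)"
    then obtain x y where x: "x \<in> f R" and y: "y \<in> A" "y \<notin> f R" and xy: "margin R x y \<le> 0"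
      using X unfolding dominant_def by force
    have "A \<noteq> {}" "x \<in> A" using x X by auto
    then have T: "dominant A R (TC A R)" "TC A R \<subseteq> f R"
      using dominant_TC[OF finite_A] TC_subset_choice[OF R] by auto
    have "y \<in> A - TC A R"
      using T(2) y by blast
    then have "x \<notin> TC A R"
      using T(1) xy unfolding dominant_def by (meson not_le)
    obtain w where w: "w \<in> TC A R"
      using T unfolding dominant_def by blast
    have wx: "w \<in> A" "w \<in> f R" "w \<noteq> x" "margin R w x > 0"
      using T w \<open>x \<notin> TC A R\<close> \<open>x \<in> A\<close> unfolding dominant_def by auto
    then have wx2: "margin R w x \<ge> 2"
      using even_margins_pos_ge_2[OF even] \<open>x \<in> A\<close> by blast
    obtain Rp where Rp: "is_profile A Rp" and lift: "lifted A x w R Rp"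
      using ex_lifted[OF finite_A R \<open>x \<in> A\<close> \<open>w \<in> A\<close>] wx(3) by metis
    have "margin_mass A Rp < margin_mass A R"
      using margin_mass_lifted_less[OF finite_A \<open>w \<in> A\<close> \<open>x \<in> A\<close> wx(3) lift wx2] .
    then have "dominant A Rp (f Rp)"
      using less.hyps Rp even_margins_lifted[OF lift even] by blast
    moreover have "margin Rp x w \<le> 0"
      using lift wx2 \<open>x \<in> A\<close> \<open>w \<in> A\<close> margin_swap[of R x w]
      by (simp add: lifted_def swap_gain_def)
    ultimately have "f R = f Rp"
      using lifted_choice_cases_if_dominant[OF Rp R \<open>w \<in> A\<close> \<open>x \<in> A\<close> wx(3)
          lifted_converse[OF _ lift]] x wx(2,3) by blast
    moreover have "margin Rp x y = margin R x y"
      using lift \<open>x \<in> A\<close> y wx(2) by (auto simp: lifted_def swap_gain_def)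
    ultimately show False
      using \<open>dominant A Rp (f Rp)\<close> x y xy unfolding dominant_def by (metis DiffI not_le)
  qed
qed

lemma dominant_choice:
  assumes R: "is_profile A R"
  shows "dominant A R (f R)"
proof -
  obtain R2 where R2: "is_profile A R2" "\<And>u v. margin R2 u v = 2 * margin R u v" "f R2 = f R"
    using ex_double[OF R] by blast
  have "dominant A R2 (f R2)"
    using dominant_choice_even[OF R2(1)] R2(2) by (simp add: even_margins_def)
  with R2 show ?thesis
    using dominant_double_iff[of R2 R] by simp
qed

lemma choice_lifted_across:
  assumes R: "is_profile A R" and R': "is_profile A R'" and "a \<in> f R" "b \<in> A - f R"
    and lift: "lifted A a b R R'"
  shows "f R' = f R"
proof (rule ccontr)
  assume changed: "f R' \<noteq> f R"
  have ab: "a \<in> A" "b \<in> A" "a \<noteq> b"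
    using assms(3,4) choice_subset[OF R] by auto
  have dom: "dominant A R (f R)"
    by (rule dominant_choice[OF R])
  then have "margin R a b > 0"
    using assms(3,4) by (simp add: dominant_def)
  then have "margin R b a \<le> 0"
    by (simp add: margin_swap[of R b a])
  then have "a \<in> f R - f R' \<and> b \<in> f R' - f R"
    using lifted_choice_cases_if_dominant[OF R R' ab lift dom] changed assms(3,4) by blast
  moreover have "f R \<subseteq> f R' \<or> f R' \<subseteq> f R"
    using dominant_nested[OF dominant_lifted[OF dom lift] dominant_choice[OF R']] assms(3) by blast
  ultimately show False by blast
qed

lemma choice_eq_if_cross_margins_grow:
  assumes G: "is_profile A G" "even_margins A G"
  shows "is_profile A R \<Longrightarrow> even_margins A R \<Longrightarrow>
    (\<And>u v. u \<in> A \<Longrightarrow> v \<in> A \<Longrightarrow> (u \<in> f R \<longleftrightarrow> v \<in> f R) \<Longrightarrow> margin G u v = margin R u v) \<Longrightarrow>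
    (\<And>u v. u \<in> f R \<Longrightarrow> v \<in> A - f R \<Longrightarrow> margin R u v \<le> margin G u v) \<Longrightarrow> f G = f R"
proof (induction "cross_gap A (f R) G R" arbitrary: R rule: less_induct)
  case less
  define X where "X = f R"
  have R: "is_profile A R" "even_margins A R"
    and inner: "\<And>u v. u \<in> A \<Longrightarrow> v \<in> A \<Longrightarrow> (u \<in> X \<longleftrightarrow> v \<in> X) \<Longrightarrow> margin G u v = margin R u v"
    and cross: "\<And>u v. u \<in> X \<Longrightarrow> v \<in> A - X \<Longrightarrow> margin R u v \<le> margin G u v"
    using less.prems unfolding X_def by auto
  have XA: "X \<subseteq> A"
    unfolding X_def by (rule choice_subset[OF R(1)])
  show ?case
  proof (cases "\<forall>u\<in>X. \<forall>v\<in>A - X. margin G u v = margin R u v")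
    case True
    have "margin G u v = margin R u v" if "u \<in> A" "v \<in> A" for u v
    proof -
      consider "u \<in> X \<longleftrightarrow> v \<in> X" | "u \<in> X" "v \<notin> X" | "v \<in> X" "u \<notin> X"
        by blast
      then show ?thesis
      proof cases
        case 1
        then show ?thesis using inner[OF that] by simp
      next
        case 2
        then show ?thesis using True that(2) by simp
      next
        case 3
        then have "margin G v u = margin R v u"
          using True that(1) by simp
        then show ?thesis
          using margin_swap[of G v u] margin_swap[of R v u] by simp
      qed
    qed
    then show ?thesis
      using choice_cong[OF G(1) R(1)] by (simp add: X_def)
  next
    case False
    then obtain a b where a: "a \<in> X" and b: "b \<in> A - X" and ne: "margin G a b \<noteq> margin R a b"
      by blast
    have ab: "a \<in> A" "b \<in> A" "a \<noteq> b"
      using a b XA by auto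
    have "even (margin G a b - margin R a b)"
      using G(2) R(2) ab by (simp add: even_margins_def)
    with cross[OF a b] ne have gap2: "margin R a b + 2 \<le> margin G a b"
      by presburger
    obtain R' where R': "is_profile A R'" and lift: "lifted A a b R R'"
      using ex_lifted[OF finite_A R(1) ab] by blast
    have fR': "f R' = X"
      using choice_lifted_across[OF R(1) R' _ _ lift] a b unfolding X_def by blast
    have gain: "margin R' u v = margin R u v + swap_gain a b u v" if "u \<in> A" "v \<in> A" for u v
      using lift that by (simp add: lifted_def)
    have gain_cross: "swap_gain a b u v = (if (u, v) = (a, b) then 2 else 0)" if "u \<in> X" for u v
      using that b by (auto simp: swap_gain_def)
    have "cross_gap A X G R' < cross_gap A X G R"
      unfolding cross_gap_def
    proof (rule sum_strict_mono_ex1)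
      show "finite (X \<times> (A - X))"
        using finite_A XA finite_subset by blast
      show "\<forall>p\<in>X \<times> (A - X). (\<lambda>(x, y). nat (margin G x y - margin R' x y)) p
          \<le> (\<lambda>(x, y). nat (margin G x y - margin R x y)) p"
      proof clarify
        fix x y
        assume "x \<in> X" "y \<in> A" "y \<notin> X"
        then have "margin R' x y \<ge> margin R x y"
          using gain[of x y] gain_cross[of x y] XA by auto
        then show "nat (margin G x y - margin R' x y) \<le> nat (margin G x y - margin R x y)"
          by simp
      qed
      show "\<exists>p\<in>X \<times> (A - X). (\<lambda>(x, y). nat (margin G x y - margin R' x y)) p
          < (\<lambda>(x, y). nat (margin G x y - margin R x y)) p"
        using gain[OF ab(1,2)] gap2 a b ab(3) by (intro bexI[of _ "(a, b)"]) (auto simp: swap_gain_def)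
    qed
    moreover have "margin G u v = margin R' u v"
      if "u \<in> A" "v \<in> A" "u \<in> X \<longleftrightarrow> v \<in> X" for u v
    proof -
      have "swap_gain a b u v = 0"
        using that(3) a b by (auto simp: swap_gain_def)
      then show ?thesis
        using inner[OF that] gain[OF that(1,2)] by simp
    qed
    moreover have "margin R' u v \<le> margin G u v" if "u \<in> X" "v \<in> A - X" for u v
      using cross[OF that] gain[of u v] gain_cross[OF that(1), of v] that XA gap2 by auto
    ultimately have "f G = X"
      using less.hyps[of R', unfolded fR' X_def[symmetric]] R' even_margins_lifted[OF lift R(2)]
      by blast
    then show ?thesis
      by (simp add: X_def)
  qed
qed

lemma choice_subset_lifted:
  assumes R: "is_profile A R" and R': "is_profile A R'" and ab: "a \<in> A" "b \<in> A" "a \<noteq> b"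
    and lift: "lifted A b a R R'" and "margin R a b \<ge> 2"
    and X: "dominant A R X" and "f R' \<subseteq> X"
  shows "f R \<subseteq> X"
proof (rule ccontr)
  assume "\<not> f R \<subseteq> X"
  then have "X \<subseteq> f R"
    using dominant_nested[OF X dominant_choice[OF R]] by blast
  moreover have "margin R' b a \<le> 0"
    using lift ab assms(7) margin_swap[of R b a] by (simp add: lifted_def swap_gain_def)
  ultimately show False
    using lifted_choice_cases_if_dominant[OF R' R ab lifted_converse[OF _ lift]
        dominant_choice[OF R']] \<open>\<not> f R \<subseteq> X\<close> \<open>f R' \<subseteq> X\<close> ab(3) by blast
qed

lemma choice_lifted_within:
  assumes R: "is_profile A R" and R': "is_profile A R'" and ab: "a \<in> A" "b \<in> A" "a \<noteq> b"
    and lift: "lifted A b a R R'" and "margin R a b \<ge> 2" and within: "\<not> (a \<in> f R \<and> b \<notin> f R)"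
  shows "f R' = f R"
proof (rule ccontr)
  assume "f R' \<noteq> f R"
  moreover have "dominant A R' (f R)"
    using dominant_lifted[OF dominant_choice[OF R] lift] within by blast
  moreover have "margin R' b a \<le> 0"
    using lift ab assms(7) margin_swap[of R b a] by (simp add: lifted_def swap_gain_def)
  ultimately show False
    using lifted_choice_cases_if_dominant[OF R' R ab lifted_converse[OF _ lift]
        dominant_choice[OF R']] dominant_nested[OF _ dominant_choice[OF R'], of "f R"] within ab(3) by blast
qed

lemma choice_eq_if_margins_across:
  assumes R: "is_profile A R" "even_margins A R" and R': "is_profile A R'" "even_margins A R'"
    and dom: "dominant A R' (f R)"
    and across: "\<And>a b. a \<in> A \<Longrightarrow> b \<in> A \<Longrightarrow> margin R a b > 0 \<Longrightarrow> a \<in> f R \<and> b \<notin> f R"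
    and across': "\<And>a b. a \<in> A \<Longrightarrow> b \<in> A \<Longrightarrow> margin R' a b > 0 \<Longrightarrow>
      a \<in> f R \<and> b \<notin> f R \<and> margin R' a b = 2"
  shows "f R' = f R"
proof -
  define n where "n = margin_mass A R"
  obtain H where H: "is_profile A H" "\<And>u v. margin H u v = 2 ^ n * margin R' u v" "f H = f R'"
    using ex_power_scaled[OF R'(1)] by blast
  have "f H = f R"
  proof (rule choice_eq_if_cross_margins_grow[OF H(1) _ R])
    show "even_margins A H"
      using R'(2) H(2) by (simp add: even_margins_def)
    show "margin H u v = margin R u v" if "u \<in> A" "v \<in> A" "u \<in> f R \<longleftrightarrow> v \<in> f R" for u v
      using margin_eq_0_if_positive_across[of A R "f R", OF across that]
        margin_eq_0_if_positive_across[of A R' "f R", OF _ that] across' H(2) by auto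
    show "margin R u v \<le> margin H u v" if "u \<in> f R" "v \<in> A - f R" for u v
    proof -
      have uv: "u \<in> A" "v \<in> A"
        using that choice_subset[OF R(1)] by auto
      have "margin R' u v = 2"
        using dom that across'[OF uv] unfolding dominant_def by auto
      moreover have "int n < 2 ^ n"
        using less_exp[of n] by (metis of_nat_less_iff of_nat_numeral of_nat_power)
      then have "margin R u v < 2 ^ n"
        using abs_margin_le_margin_mass[OF finite_A uv, of R] unfolding n_def by linarith
      moreover have "margin H u v = 2 ^ n * 2"
        using H(2) \<open>margin R' u v = 2\<close> by simp
      ultimately show ?thesis
        using zero_le_power[of "2::int" n] by linarith
    qed
  qed
  with H(3) show ?thesis by simp
qed

lemma robust_choice_even:
  "is_profile A R \<Longrightarrow> even_margins A R \<Longrightarrow> is_profile A R' \<Longrightarrow> even_margins A R' \<Longrightarrow>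
    dominant A R' (f R) \<Longrightarrow> f R' \<subseteq> f R"
proof (induction "margin_mass A R + margin_mass A R'" arbitrary: R R' rule: less_induct)
  txt \<open>Weaken margins one ballot at a time until \<open>R'\<close> has only the margins 2 from \<open>f R\<close> to
    its complement and \<open>R\<close> only positive margins from \<open>f R\<close> to its complement; such
    profiles have the same choice set.\<close>
  case less
  define X where "X = f R"
  have R: "is_profile A R" "even_margins A R" and R': "is_profile A R'" "even_margins A R'"
    and dom: "dominant A R' X"
    using less.prems unfolding X_def by auto
  show ?case
  proof (cases "\<exists>a\<in>A. \<exists>b\<in>A. margin R' a b > 0 \<and> \<not> (a \<in> X \<and> b \<notin> X \<and> margin R' a b = 2)")
    case True
    then obtain a b where ab: "a \<in> A" "b \<in> A" and pos: "margin R' a b > 0"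
      and not_minimal: "\<not> (a \<in> X \<and> b \<notin> X \<and> margin R' a b = 2)"
      by blast
    have ge2: "margin R' a b \<ge> 2" and "a \<noteq> b"
      using even_margins_pos_ge_2[OF R'(2) ab pos] pos by auto
    obtain Rq where Rq: "is_profile A Rq" and lift: "lifted A b a R' Rq"
      using ex_lifted[OF finite_A R'(1) ab(2,1)] \<open>a \<noteq> b\<close> by metis
    have "margin_mass A Rq < margin_mass A R'"
      using margin_mass_lifted_less[OF finite_A ab \<open>a \<noteq> b\<close> lift ge2] .
    moreover have "dominant A Rq X"
      using dominant_lifted[OF dom lift] not_minimal ge2 by auto
    ultimately have "f Rq \<subseteq> X"
      using less.hyps[of R Rq] R Rq even_margins_lifted[OF lift R'(2)] unfolding X_def by auto
    then show ?thesis
      using choice_subset_lifted[OF R'(1) Rq ab \<open>a \<noteq> b\<close> lift ge2 dom] unfolding X_def by blast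
  next
    case minimal': False
    show ?thesis
    proof (cases "\<exists>a\<in>A. \<exists>b\<in>A. margin R a b > 0 \<and> \<not> (a \<in> X \<and> b \<notin> X)")
      case True
      then obtain a b where ab: "a \<in> A" "b \<in> A" and pos: "margin R a b > 0"
        and within: "\<not> (a \<in> X \<and> b \<notin> X)"
        by blast
      have ge2: "margin R a b \<ge> 2" and "a \<noteq> b"
        using even_margins_pos_ge_2[OF R(2) ab pos] pos by auto
      obtain Rq where Rq: "is_profile A Rq" and lift: "lifted A b a R Rq"
        using ex_lifted[OF finite_A R(1) ab(2,1)] \<open>a \<noteq> b\<close> by metis
      have "f Rq = X"
        using choice_lifted_within[OF R(1) Rq ab \<open>a \<noteq> b\<close> lift ge2] within unfolding X_def by blast
      moreover have "margin_mass A Rq < margin_mass A R"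
        using margin_mass_lifted_less[OF finite_A ab \<open>a \<noteq> b\<close> lift ge2] .
      ultimately show ?thesis
        using less.hyps[of Rq R'] Rq even_margins_lifted[OF lift R(2)] R' dom
        unfolding X_def by auto
    next
      case False
      then have "f R' = f R"
        using choice_eq_if_margins_across[OF R R' dom[unfolded X_def]] minimal'
        unfolding X_def by blast
      then show ?thesis by simp
    qed
  qed
qed

lemma robust_choice:
  assumes R: "is_profile A R" and R': "is_profile A R'" and "dominant A R' (f R)"
  shows "f R' \<subseteq> f R"
proof -
  obtain R2 where R2: "is_profile A R2" "\<And>u v. margin R2 u v = 2 * margin R u v" "f R2 = f R"
    using ex_double[OF R] by blast
  obtain R2' where R2': "is_profile A R2'" "\<And>u v. margin R2' u v = 2 * margin R' u v" "f R2' = f R'"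
    using ex_double[OF R'] by blast
  have "f R2' \<subseteq> f R2"
    using robust_choice_even[OF R2(1) _ R2'(1)] R2 R2' assms(3) dominant_double_iff[of R2' R']
    by (simp add: even_margins_def)
  with R2 R2' show ?thesis by simp
qed

end

theorem lemma6:
  fixes A :: "'a set" and f :: "'a profile \<Rightarrow> 'a set"
  assumes "finite A"
    and "is_SCC A f"
    and "pairwise_scc A f"
    and "strongly_condorcet_consistent A f"
    and "homogeneous A f"
    and "strategyproof A f"
    and "\<forall>R. is_profile A R \<longrightarrow> TC A R \<subseteq> f R"
  shows "dominant_set_rule A f \<and> robust A f"
proof -
  interpret tc_including_scc A f
    by unfold_locales (use assms in auto)
  show ?thesis
    unfolding dominant_set_rule_def robust_def using dominant_choice robust_choice by blast
qed

end
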